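(* Let $p\ge 1$ and let $u,v,w\in E^p$. Then for every $\alpha\in[0,1]$, $$D(\alpha u+(1-\alpha)v,\,w)\le \sqrt{2}\,\max\{D(u,w),D(v,w)\}.$$
   Context: A fuzzy subset of $\mathbb{R}^p$ is a function $u:\mathbb{R}^p\to[0,1]$. Its $\alpha$-cut is $[u]_\alpha=\{x\in\mathbb{R}^p: u(x)\ge\alpha\}$ for $\alpha\in(0,1]$, and $[u]_0=\overline{\{x\in\mathbb{R}^p: u(x)>0\}}$. The set $E^p$ of $p$-dimensional fuzzy numbers consists of all fuzzy subsets $u$ of $\mathbb{R}^p$ such that $[u]_\alpha$ is a nonempty compact convex subset of $\mathbb{R}^p$ for every $\alpha\in[0,1]$. For $u,v\in E^p$ and $r\in\mathbb{R}$, $u+v$ and $r\cdot u$ are the elements of $E^p$ determined by $[u+v]_\alpha=\{x+y: x\in[u]_\alpha,\ y\in[v]_\alpha\}$ and $[r\cdot u]_\alpha=\{rx: x\in[u]_\alpha\}$ for all $\alpha\in[0,1]$. The sendograph of $u\in E^p$ is $\mathrm{send}\,u=\{(x,\alpha)\in[u]_0\times[0,1]: u(x)\ge\alpha\}\subset\mathbb{R}^{p+1}$. For nonempty compact $U,V\subset\mathbb{R}^{p+1}$ (with the Euclidean metric $d$), the Hausdorff metric is $H(U,V)=\max\{H^*(U,V),H^*(V,U)\}$ with $H^*(U,V)=\sup_{a\in U}\inf_{b\in V}d(a,b)$. The sendograph metric on $E^p$ is $D(u,v)=H(\mathrm{send}\,u,\mathrm{send}\,v)$. *)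

theory Defs
  imports "HOL-Analysis.Analysis"
begin

text \<open>R^p is modelled by an arbitrary Euclidean space 'a (dimension DIM('a) \<ge> 1).
  Fuzzy subsets are functions 'a \<Rightarrow> real with values in [0,1].\<close>

definition alpha_cut :: "('a::euclidean_space \<Rightarrow> real) \<Rightarrow> real \<Rightarrow> 'a set" where
  "alpha_cut u \<alpha> = (if \<alpha> = 0 then closure {x. u x > 0} else {x. u x \<ge> \<alpha>})"

definition fuzzy_numbers :: "('a::euclidean_space \<Rightarrow> real) set" where
  "fuzzy_numbers = {u. (\<forall>x. 0 \<le> u x \<and> u x \<le> 1) \<and>
     (\<forall>\<alpha>\<in>{0..1}. alpha_cut u \<alpha> \<noteq> {} \<and> compact (alpha_cut u \<alpha>) \<and> convex (alpha_cut u \<alpha>))}"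

definition fuzzy_add :: "('a::euclidean_space \<Rightarrow> real) \<Rightarrow> ('a \<Rightarrow> real) \<Rightarrow> ('a \<Rightarrow> real)" where
  "fuzzy_add u v = (THE w. w \<in> fuzzy_numbers \<and>
     (\<forall>\<alpha>\<in>{0..1}. alpha_cut w \<alpha> = {x + y | x y. x \<in> alpha_cut u \<alpha> \<and> y \<in> alpha_cut v \<alpha>}))"

definition fuzzy_scale :: "real \<Rightarrow> ('a::euclidean_space \<Rightarrow> real) \<Rightarrow> ('a \<Rightarrow> real)" where
  "fuzzy_scale r u = (THE w. w \<in> fuzzy_numbers \<and>
     (\<forall>\<alpha>\<in>{0..1}. alpha_cut w \<alpha> = {r *\<^sub>R x | x. x \<in> alpha_cut u \<alpha>}))"

definition sendograph :: "('a::euclidean_space \<Rightarrow> real) \<Rightarrow> ('a \<times> real) set" where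
  "sendograph u = {(x, \<alpha>). x \<in> alpha_cut u 0 \<and> \<alpha> \<in> {0..1} \<and> u x \<ge> \<alpha>}"

definition hausdorff_excess :: "('b::metric_space) set \<Rightarrow> 'b set \<Rightarrow> real" where
  "hausdorff_excess U V = (SUP a\<in>U. INF b\<in>V. dist a b)"

definition hausdorff_metric :: "('b::metric_space) set \<Rightarrow> 'b set \<Rightarrow> real" where
  "hausdorff_metric U V = max (hausdorff_excess U V) (hausdorff_excess V U)"

text \<open>Sendograph metric; the product 'a \<times> real carries the Euclidean metric.\<close>
definition send_metric :: "('a::euclidean_space \<Rightarrow> real) \<Rightarrow> ('a \<Rightarrow> real) \<Rightarrow> real" where
  "send_metric u v = hausdorff_metric (sendograph u) (sendograph v)"

end

(* The cuts of a u + (1 - a) v are the Minkowski combinations of the cuts of u and v, and cuts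
   shrink as the level grows, so the sendograph of a u + (1 - a) v is the image of
   send u \<times> send v under level_comb a; as the cuts of w are convex, send w is the image of
   send w \<times> send w.  If both arguments move by at most d, the space component and the level of
   the result move by at most d each, so level_comb a is sqrt 2-Lipschitz for the max-distance
   on pairs, and the Hausdorff distance between the two images is at most sqrt 2 times the
   larger of D(u, w) and D(v, w). *)

theory Submission
  imports Defs
begin

lemma infdist_less_approx:
  assumes "A \<noteq> {}" and "0 < e"
  shows "\<exists>y\<in>A. dist x y < infdist x A + e"
proof -
  have "(INF y\<in>A. dist x y) < infdist x A + e" using assms by (simp add: infdist_notempty)
  then show ?thesis using cINF_less_iff[OF assms(1) bdd_below_image_dist] by blast
qed

lemma infdist_le_hausdorff_excess:
  assumes "a \<in> U" and "bounded U" and "V \<noteq> {}"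
  shows "infdist a V \<le> hausdorff_excess U V"
proof -
  obtain b where b: "b \<in> V" using assms(3) by blast
  obtain e where "\<forall>a\<in>U. dist b a \<le> e" using assms(2) bounded_any_center by blast
  then have "bdd_above ((\<lambda>a. infdist a V) ` U)"
    using infdist_le[OF b] by (intro bdd_aboveI2[of _ _ e]) (metis dist_commute order_trans)
  then show ?thesis
    unfolding hausdorff_excess_def infdist_notempty[OF assms(3), symmetric]
    by (rule cSUP_upper[OF assms(1)])
qed

lemma hausdorff_excess_le:
  assumes "U \<noteq> {}" and "V \<noteq> {}" and "\<And>a. a \<in> U \<Longrightarrow> infdist a V \<le> K"
  shows "hausdorff_excess U V \<le> K"
  unfolding hausdorff_excess_def infdist_notempty[OF assms(2), symmetric]
  by (rule cSUP_least[OF assms(1) assms(3)])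

lemma infdist_image_pairs_le:
  fixes f :: "'a::metric_space \<Rightarrow> 'b::metric_space \<Rightarrow> 'c::metric_space"
  assumes lip: "\<And>a b c d. dist (f a b) (f c d) \<le> L * max (dist a c) (dist b d)"
    and "0 \<le> L" and C: "C \<noteq> {}" and D: "D \<noteq> {}"
  shows "infdist (f a b) (case_prod f ` (C \<times> D)) \<le> L * max (infdist a C) (infdist b D)"
proof (rule field_le_epsilon)
  fix e :: real assume "0 < e"
  define \<delta> where "\<delta> = e / (L + 1)"
  have "0 < \<delta>" using \<open>0 < e\<close> \<open>0 \<le> L\<close> by (simp add: \<delta>_def)
  obtain c where c: "c \<in> C" "dist a c < infdist a C + \<delta>"
    using infdist_less_approx[OF C \<open>0 < \<delta>\<close>] by blast
  obtain d where d: "d \<in> D" "dist b d < infdist b D + \<delta>"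
    using infdist_less_approx[OF D \<open>0 < \<delta>\<close>] by blast
  have "infdist (f a b) (case_prod f ` (C \<times> D)) \<le> dist (f a b) (f c d)"
    using c d by (intro infdist_le) auto
  also have "\<dots> \<le> L * max (dist a c) (dist b d)" by (rule lip)
  also have "\<dots> \<le> L * (max (infdist a C) (infdist b D) + \<delta>)"
    using c d \<open>0 \<le> L\<close> by (intro mult_left_mono) auto
  also have "\<dots> \<le> L * max (infdist a C) (infdist b D) + e"
    using \<open>0 < e\<close> \<open>0 \<le> L\<close> by (simp add: \<delta>_def distrib_left field_simps)
  finally show "infdist (f a b) (case_prod f ` (C \<times> D)) \<le> L * max (infdist a C) (infdist b D) + e" .
qed

lemma hausdorff_excess_image_pairs_le:
  fixes f :: "'a::metric_space \<Rightarrow> 'b::metric_space \<Rightarrow> 'c::metric_space"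
  assumes lip: "\<And>a b c d. dist (f a b) (f c d) \<le> L * max (dist a c) (dist b d)" and "0 \<le> L"
    and "A \<noteq> {}" "B \<noteq> {}" "C \<noteq> {}" "D \<noteq> {}" and "bounded A" "bounded B"
  shows "hausdorff_excess (case_prod f ` (A \<times> B)) (case_prod f ` (C \<times> D))
    \<le> L * max (hausdorff_excess A C) (hausdorff_excess B D)"
proof (rule hausdorff_excess_le)
  fix p assume "p \<in> case_prod f ` (A \<times> B)"
  then obtain a b where "a \<in> A" "b \<in> B" "p = f a b" by auto
  then have "infdist p (case_prod f ` (C \<times> D)) \<le> L * max (infdist a C) (infdist b D)"
    using infdist_image_pairs_le[OF lip] assms by blast
  also have "\<dots> \<le> L * max (hausdorff_excess A C) (hausdorff_excess B D)"
    using \<open>a \<in> A\<close> \<open>b \<in> B\<close> assms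
    by (intro mult_left_mono max.mono infdist_le_hausdorff_excess) auto
  finally show "infdist p (case_prod f ` (C \<times> D)) \<le> L * max (hausdorff_excess A C) (hausdorff_excess B D)" .
qed (use assms in auto)

lemma hausdorff_metric_image_pairs_le:
  fixes f :: "'a::metric_space \<Rightarrow> 'b::metric_space \<Rightarrow> 'c::metric_space"
  assumes lip: "\<And>a b c d. dist (f a b) (f c d) \<le> L * max (dist a c) (dist b d)" and "0 \<le> L"
    and "A \<noteq> {}" "B \<noteq> {}" "C \<noteq> {}" "D \<noteq> {}"
    and "bounded A" "bounded B" "bounded C" "bounded D"
  shows "hausdorff_metric (case_prod f ` (A \<times> B)) (case_prod f ` (C \<times> D))
    \<le> L * max (hausdorff_metric A C) (hausdorff_metric B D)"
proof -
  have "L * max (hausdorff_excess A C) (hausdorff_excess B D)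
      \<le> L * max (hausdorff_metric A C) (hausdorff_metric B D)"
    and "L * max (hausdorff_excess C A) (hausdorff_excess D B)
      \<le> L * max (hausdorff_metric A C) (hausdorff_metric B D)"
    using \<open>0 \<le> L\<close> by (auto intro!: mult_left_mono simp: hausdorff_metric_def)
  moreover note hausdorff_excess_image_pairs_le[OF lip assms(2-8)]
    and hausdorff_excess_image_pairs_le[OF lip assms(2) assms(5,6,3,4,9,10)]
  ultimately show ?thesis by (simp add: hausdorff_metric_def)
qed

lemma alpha_cut_pos: "0 < \<beta> \<Longrightarrow> alpha_cut u \<beta> = {x. \<beta> \<le> u x}"
  unfolding alpha_cut_def by simp

lemma fuzzy_numbers_range:
  assumes "u \<in> fuzzy_numbers" shows "0 \<le> u x" "u x \<le> 1"
  using assms unfolding fuzzy_numbers_def by auto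

lemma fuzzy_numbers_alpha_cut:
  assumes "u \<in> fuzzy_numbers" "\<beta> \<in> {0..1}"
  shows "alpha_cut u \<beta> \<noteq> {}" "compact (alpha_cut u \<beta>)" "convex (alpha_cut u \<beta>)"
  using assms unfolding fuzzy_numbers_def by auto

lemma alpha_cut_antimono:
  assumes "0 \<le> \<gamma>" "\<gamma> \<le> \<beta>"
  shows "alpha_cut u \<beta> \<subseteq> alpha_cut u \<gamma>"
proof (cases "\<gamma> = 0")
  case True
  have "{x. \<beta> \<le> u x} \<subseteq> closure {x. 0 < u x}" if "0 < \<beta>"
    using that closure_subset by fastforce
  with True assms show ?thesis by (cases "\<beta> = 0") (auto simp: alpha_cut_def)
qed (use assms in \<open>auto simp: alpha_cut_pos\<close>)

lemma fuzzy_numbers_eqI: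
  assumes "u \<in> fuzzy_numbers" "v \<in> fuzzy_numbers"
    and cuts: "\<And>\<beta>. \<beta> \<in> {0<..1} \<Longrightarrow> alpha_cut u \<beta> = alpha_cut v \<beta>"
  shows "u = v"
proof
  fix x
  have "v x \<le> u x" if "u \<in> fuzzy_numbers" "v \<in> fuzzy_numbers"
    "\<And>\<beta>. \<beta> \<in> {0<..1} \<Longrightarrow> alpha_cut u \<beta> = alpha_cut v \<beta>" for u v :: "'a \<Rightarrow> real"
  proof (cases "v x = 0")
    case False
    with fuzzy_numbers_range[OF that(2), of x] have "v x \<in> {0<..1}" by auto
    with that(3)[of "v x"] show ?thesis by (auto simp: alpha_cut_pos)
  qed (use fuzzy_numbers_range[OF that(1)] in simp)
  with assms show "u x = v x" by (metis order_antisym)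
qed

text \<open>The cut families of fuzzy numbers (Negoita-Ralescu); they make the definite descriptions
  in fuzzy_add and fuzzy_scale well-defined.\<close>

definition fuzzy_cut_family :: "(real \<Rightarrow> 'a::real_normed_vector set) \<Rightarrow> bool" where
  "fuzzy_cut_family C \<longleftrightarrow>
     (\<forall>\<beta>\<in>{0..1}. C \<beta> \<noteq> {} \<and> compact (C \<beta>) \<and> convex (C \<beta>)) \<and>
     (\<forall>\<beta> \<gamma>. 0 < \<gamma> \<longrightarrow> \<gamma> \<le> \<beta> \<longrightarrow> C \<beta> \<subseteq> C \<gamma>) \<and>
     (\<forall>\<beta>\<in>{0<..1}. (\<Inter>\<gamma>\<in>{0<..<\<beta>}. C \<gamma>) \<subseteq> C \<beta>) \<and>
     C 0 = closure (\<Union>\<beta>\<in>{0<..1}. C \<beta>)"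

lemma fuzzy_cut_familyI:
  assumes "\<And>\<beta>. \<beta> \<in> {0..1} \<Longrightarrow> C \<beta> \<noteq> {}" and "\<And>\<beta>. \<beta> \<in> {0..1} \<Longrightarrow> compact (C \<beta>)"
    and "\<And>\<beta>. \<beta> \<in> {0..1} \<Longrightarrow> convex (C \<beta>)"
    and "\<And>\<beta> \<gamma>. 0 < \<gamma> \<Longrightarrow> \<gamma> \<le> \<beta> \<Longrightarrow> C \<beta> \<subseteq> C \<gamma>"
    and "\<And>\<beta>. \<beta> \<in> {0<..1} \<Longrightarrow> (\<Inter>\<gamma>\<in>{0<..<\<beta>}. C \<gamma>) \<subseteq> C \<beta>"
    and "C 0 = closure (\<Union>\<beta>\<in>{0<..1}. C \<beta>)"
  shows "fuzzy_cut_family C"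
  unfolding fuzzy_cut_family_def using assms by (intro conjI ballI allI impI) auto

lemma fuzzy_cut_familyD:
  assumes "fuzzy_cut_family C"
  shows "\<beta> \<in> {0..1} \<Longrightarrow> C \<beta> \<noteq> {}" and "\<beta> \<in> {0..1} \<Longrightarrow> compact (C \<beta>)"
    and "\<beta> \<in> {0..1} \<Longrightarrow> convex (C \<beta>)" and "0 < \<gamma> \<Longrightarrow> \<gamma> \<le> \<beta> \<Longrightarrow> C \<beta> \<subseteq> C \<gamma>"
    and "\<beta> \<in> {0<..1} \<Longrightarrow> (\<Inter>\<gamma>\<in>{0<..<\<beta>}. C \<gamma>) \<subseteq> C \<beta>"
    and "C 0 = closure (\<Union>\<beta>\<in>{0<..1}. C \<beta>)"
  using assms unfolding fuzzy_cut_family_def by blast+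

lemma fuzzy_cut_family_alpha_cut:
  assumes u: "u \<in> fuzzy_numbers"
  shows "fuzzy_cut_family (alpha_cut u)"
proof (rule fuzzy_cut_familyI)
  fix \<beta> \<gamma> :: real assume "0 < \<gamma>" "\<gamma> \<le> \<beta>"
  then show "alpha_cut u \<beta> \<subseteq> alpha_cut u \<gamma>" by (simp add: alpha_cut_antimono)
next
  fix \<beta> :: real assume \<beta>: "\<beta> \<in> {0<..1}"
  show "(\<Inter>\<gamma>\<in>{0<..<\<beta>}. alpha_cut u \<gamma>) \<subseteq> alpha_cut u \<beta>"
  proof
    fix x assume x: "x \<in> (\<Inter>\<gamma>\<in>{0<..<\<beta>}. alpha_cut u \<gamma>)"
    have "\<beta> \<le> u x"
      by (rule dense_le_bounded[of 0]) (use \<beta> x in \<open>auto simp: alpha_cut_pos\<close>)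
    with \<beta> show "x \<in> alpha_cut u \<beta>" by (simp add: alpha_cut_pos)
  qed
next
  have "{x. 0 < u x} = (\<Union>\<beta>\<in>{0<..1}. alpha_cut u \<beta>)"
    using fuzzy_numbers_range[OF u] by (fastforce simp: alpha_cut_pos)
  then show "alpha_cut u 0 = closure (\<Union>\<beta>\<in>{0<..1}. alpha_cut u \<beta>)"
    by (simp add: alpha_cut_def)
qed (use fuzzy_numbers_alpha_cut[OF u] in auto)

lemma ex_fuzzy_number_with_cuts:
  fixes C :: "real \<Rightarrow> 'a::euclidean_space set"
  assumes "fuzzy_cut_family C"
  shows "\<exists>w\<in>fuzzy_numbers. \<forall>\<beta>\<in>{0..1}. alpha_cut w \<beta> = C \<beta>"
proof -
  note C = fuzzy_cut_familyD[OF assms]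
  \<comment> \<open>the grade of x is the largest level whose cut contains x; the 0 keeps Sup off the empty set\<close>
  define S where "S x = insert 0 {\<beta>\<in>{0<..1}. x \<in> C \<beta>}" for x
  define w where "w x = Sup (S x)" for x
  have bdd: "bdd_above (S x)" for x by (rule bdd_aboveI[of _ 1]) (auto simp: S_def)
  have w_range: "0 \<le> w x" "w x \<le> 1" for x
    unfolding w_def using bdd by (auto intro: cSup_upper cSup_least simp: S_def)
  have le_w: "\<beta> \<le> w x" if "x \<in> C \<beta>" "\<beta> \<in> {0<..1}" for x \<beta>
    unfolding w_def using bdd that by (auto intro: cSup_upper simp: S_def)
  have less_w: "\<exists>\<beta>\<in>{0<..1}. \<gamma> < \<beta> \<and> x \<in> C \<beta>" if "0 \<le> \<gamma>" "\<gamma> < w x" for x \<gamma>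
    using that less_cSupD[of "S x" \<gamma>] by (force simp: w_def S_def)
  have cut_w: "{x. \<beta> \<le> w x} = C \<beta>" if \<beta>: "\<beta> \<in> {0<..1}" for \<beta>
  proof
    show "C \<beta> \<subseteq> {x. \<beta> \<le> w x}" using le_w \<beta> by auto
    show "{x. \<beta> \<le> w x} \<subseteq> C \<beta>"
    proof
      fix x assume "x \<in> {x. \<beta> \<le> w x}"
      have "x \<in> C \<gamma>" if \<gamma>: "\<gamma> \<in> {0<..<\<beta>}" for \<gamma>
      proof -
        obtain \<beta>' where "\<beta>' \<in> {0<..1}" "\<gamma> < \<beta>'" "x \<in> C \<beta>'"
          using less_w[of \<gamma> x] \<gamma> \<open>x \<in> {x. \<beta> \<le> w x}\<close> by auto
        with C(4)[of \<gamma> \<beta>'] \<gamma> show ?thesis by auto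
      qed
      then show "x \<in> C \<beta>" using C(5)[OF \<beta>] by blast
    qed
  qed
  have "{x. 0 < w x} = (\<Union>\<beta>\<in>{0<..1}. C \<beta>)"
    using less_w[of 0] le_w by fastforce
  then have cuts: "\<forall>\<beta>\<in>{0..1}. alpha_cut w \<beta> = C \<beta>"
    using C cut_w by (auto simp: alpha_cut_def)
  then have "w \<in> fuzzy_numbers"
    unfolding fuzzy_numbers_def using w_range C by auto
  with cuts show ?thesis by blast
qed

lemma the_fuzzy_number_with_cuts:
  fixes C :: "real \<Rightarrow> 'a::euclidean_space set"
  assumes C: "fuzzy_cut_family C"
  defines "w \<equiv> THE w. w \<in> fuzzy_numbers \<and> (\<forall>\<beta>\<in>{0..1}. alpha_cut w \<beta> = C \<beta>)"
  shows "w \<in> fuzzy_numbers" and "\<beta> \<in> {0..1} \<Longrightarrow> alpha_cut w \<beta> = C \<beta>"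
proof -
  obtain w\<^sub>0 where w\<^sub>0: "w\<^sub>0 \<in> fuzzy_numbers" "\<forall>\<beta>\<in>{0..1}. alpha_cut w\<^sub>0 \<beta> = C \<beta>"
    using ex_fuzzy_number_with_cuts[OF C] by blast
  have "\<exists>!w. w \<in> fuzzy_numbers \<and> (\<forall>\<beta>\<in>{0..1}. alpha_cut w \<beta> = C \<beta>)"
  proof (rule ex1I[of _ w\<^sub>0])
    fix w assume "w \<in> fuzzy_numbers \<and> (\<forall>\<beta>\<in>{0..1}. alpha_cut w \<beta> = C \<beta>)"
    with w\<^sub>0 show "w = w\<^sub>0" by (intro fuzzy_numbers_eqI) auto
  qed (use w\<^sub>0 in blast)
  then have "w \<in> fuzzy_numbers \<and> (\<forall>\<beta>\<in>{0..1}. alpha_cut w \<beta> = C \<beta>)"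
    unfolding w_def by (rule theI')
  then show "w \<in> fuzzy_numbers" and "\<beta> \<in> {0..1} \<Longrightarrow> alpha_cut w \<beta> = C \<beta>" by auto
qed

lemma fuzzy_cut_family_Times:
  assumes A: "fuzzy_cut_family A" and B: "fuzzy_cut_family B"
  shows "fuzzy_cut_family (\<lambda>\<beta>. A \<beta> \<times> B \<beta>)"
proof -
  note A = fuzzy_cut_familyD[OF A] and B = fuzzy_cut_familyD[OF B]
  have "(\<Union>\<beta>\<in>{0<..1}. A \<beta> \<times> B \<beta>) = (\<Union>\<beta>\<in>{0<..1}. A \<beta>) \<times> (\<Union>\<beta>\<in>{0<..1}. B \<beta>)"
  proof (intro equalityI subsetI)
    fix p assume "p \<in> (\<Union>\<beta>\<in>{0<..1}. A \<beta>) \<times> (\<Union>\<beta>\<in>{0<..1}. B \<beta>)"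
    then obtain \<beta>\<^sub>1 \<beta>\<^sub>2 where "\<beta>\<^sub>1 \<in> {0<..1}" "\<beta>\<^sub>2 \<in> {0<..1}" "fst p \<in> A \<beta>\<^sub>1" "snd p \<in> B \<beta>\<^sub>2"
      by auto
    with A(4)[of "min \<beta>\<^sub>1 \<beta>\<^sub>2" \<beta>\<^sub>1] B(4)[of "min \<beta>\<^sub>1 \<beta>\<^sub>2" \<beta>\<^sub>2]
    show "p \<in> (\<Union>\<beta>\<in>{0<..1}. A \<beta> \<times> B \<beta>)"
      by (intro UN_I[of "min \<beta>\<^sub>1 \<beta>\<^sub>2"]) (auto simp: mem_Times_iff)
  qed auto
  then show ?thesis
  proof (intro fuzzy_cut_familyI)
    fix \<beta> :: real assume "\<beta> \<in> {0<..1}"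
    then show "(\<Inter>\<gamma>\<in>{0<..<\<beta>}. A \<gamma> \<times> B \<gamma>) \<subseteq> A \<beta> \<times> B \<beta>"
      using A(5) B(5) by (fastforce simp: mem_Times_iff)
  qed (use A B in \<open>auto simp: compact_Times convex_Times closure_Times Sigma_mono\<close>)
qed

lemma fuzzy_cut_family_linear_image:
  fixes f :: "'a::euclidean_space \<Rightarrow> 'b::euclidean_space"
  assumes f: "linear f" and C: "fuzzy_cut_family C"
  shows "fuzzy_cut_family (\<lambda>\<beta>. f ` C \<beta>)"
proof -
  note C = fuzzy_cut_familyD[OF C]
  have cont_at: "isCont f x" for x using f by (simp add: linear_continuous_at linear_linear)
  then have cont: "continuous_on S f" for S by (simp add: continuous_at_imp_continuous_on)
  have left_cont: "z \<in> f ` C \<beta>"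
    if \<beta>: "\<beta> \<in> {0<..1}" and z: "\<forall>\<gamma>\<in>{0<..<\<beta>}. z \<in> f ` C \<gamma>" for \<beta> z
  proof -
    define K where "K \<gamma> = C \<gamma> \<inter> f -` {z}" for \<gamma>
    have "\<Inter>(K ` {0<..<\<beta>}) \<noteq> {}"
    proof (rule compact_chain)
      show "compact S" if "S \<in> K ` {0<..<\<beta>}" for S
        using that \<beta> C(2) cont_at unfolding K_def
        by (auto intro!: compact_Int_closed continuous_closed_vimage)
      show "{} \<notin> K ` {0<..<\<beta>}" using z by (force simp: K_def)
      show "S \<subseteq> T \<or> T \<subseteq> S" if "S \<in> K ` {0<..<\<beta>} \<and> T \<in> K ` {0<..<\<beta>}" for S T
      proof -
        from that obtain \<gamma> \<gamma>' where "S = K \<gamma>" "T = K \<gamma>'" "0 < \<gamma>" "0 < \<gamma>'" by auto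
        then show ?thesis
          using C(4)[of \<gamma> \<gamma>'] C(4)[of \<gamma>' \<gamma>] by (cases "\<gamma> \<le> \<gamma>'") (auto simp: K_def)
      qed
    qed
    then obtain x where x: "\<forall>\<gamma>\<in>{0<..<\<beta>}. x \<in> C \<gamma> \<and> f x = z"
      using \<beta> by (auto simp: K_def)
    then have "x \<in> C \<beta>" using C(5)[OF \<beta>] by blast
    moreover have "\<beta> / 2 \<in> {0<..<\<beta>}" using \<beta> by simp
    then have "f x = z" using x by blast
    ultimately show ?thesis by blast
  qed
  have closure_image: "closure (f ` S) = f ` closure S" if "compact (closure S)" for S
  proof
    show "f ` closure S \<subseteq> closure (f ` S)"
      by (rule continuous_image_closure_subset[OF cont subset_refl])
    show "closure (f ` S) \<subseteq> f ` closure S"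
      using that by (intro closure_minimal image_mono closure_subset compact_imp_closed
          compact_continuous_image[OF cont])
  qed
  have "compact (closure (\<Union>\<beta>\<in>{0<..1}. C \<beta>))" using C(2)[of 0] C(6) by simp
  then have "f ` C 0 = closure (\<Union>\<beta>\<in>{0<..1}. f ` C \<beta>)"
    using closure_image C(6) by (simp add: image_UN[symmetric])
  then show ?thesis
    using C f left_cont
    by (intro fuzzy_cut_familyI) (auto simp: compact_continuous_image[OF cont] convex_linear_image image_mono)
qed

lemma fuzzy_cut_family_scaleR:
  fixes C :: "real \<Rightarrow> 'a::euclidean_space set"
  assumes "fuzzy_cut_family C"
  shows "fuzzy_cut_family (\<lambda>\<beta>. {r *\<^sub>R x | x. x \<in> C \<beta>})"
  using fuzzy_cut_family_linear_image[OF bounded_linear_scaleR_right[THEN bounded_linear.linear] assms]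
  by (simp add: Setcompr_eq_image)

lemma fuzzy_cut_family_plus:
  fixes A B :: "real \<Rightarrow> 'a::euclidean_space set"
  assumes "fuzzy_cut_family A" and "fuzzy_cut_family B"
  shows "fuzzy_cut_family (\<lambda>\<beta>. {x + y | x y. x \<in> A \<beta> \<and> y \<in> B \<beta>})"
proof -
  have lin: "linear (\<lambda>(x, y). x + y :: 'a)" by (rule linearI) (auto simp: algebra_simps)
  have "{x + y | x y. x \<in> A \<beta> \<and> y \<in> B \<beta>} = (\<lambda>(x, y). x + y) ` (A \<beta> \<times> B \<beta>)"
    for \<beta> by auto
  then show ?thesis
    using fuzzy_cut_family_linear_image[OF lin fuzzy_cut_family_Times[OF assms]] by simp
qed

lemma
  assumes "u \<in> fuzzy_numbers"
  shows fuzzy_scale_in_fuzzy_numbers: "fuzzy_scale r u \<in> fuzzy_numbers"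
    and alpha_cut_fuzzy_scale:
      "\<beta> \<in> {0..1} \<Longrightarrow> alpha_cut (fuzzy_scale r u) \<beta> = {r *\<^sub>R x | x. x \<in> alpha_cut u \<beta>}"
  using the_fuzzy_number_with_cuts[OF fuzzy_cut_family_scaleR[OF fuzzy_cut_family_alpha_cut[OF assms]]]
  unfolding fuzzy_scale_def by blast+

lemma
  assumes "u \<in> fuzzy_numbers" and "v \<in> fuzzy_numbers"
  shows fuzzy_add_in_fuzzy_numbers: "fuzzy_add u v \<in> fuzzy_numbers"
    and alpha_cut_fuzzy_add: "\<beta> \<in> {0..1} \<Longrightarrow>
      alpha_cut (fuzzy_add u v) \<beta> = {x + y | x y. x \<in> alpha_cut u \<beta> \<and> y \<in> alpha_cut v \<beta>}"
  using the_fuzzy_number_with_cuts[OF fuzzy_cut_family_plus[OF assms[THEN fuzzy_cut_family_alpha_cut]]]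
  unfolding fuzzy_add_def by blast+

lemma mem_sendograph:
  assumes "u \<in> fuzzy_numbers"
  shows "(x, \<beta>) \<in> sendograph u \<longleftrightarrow> \<beta> \<in> {0..1} \<and> x \<in> alpha_cut u \<beta>"
  using assms alpha_cut_antimono[of 0 \<beta> u] fuzzy_numbers_range[OF assms, of x]
  by (cases "\<beta> = 0") (auto simp: sendograph_def alpha_cut_pos)

lemma sendograph_nonempty:
  assumes "u \<in> fuzzy_numbers" shows "sendograph u \<noteq> {}"
proof -
  obtain x where "x \<in> alpha_cut u 0" using fuzzy_numbers_alpha_cut(1)[OF assms, of 0] by auto
  then have "(x, 0) \<in> sendograph u" by (simp add: mem_sendograph[OF assms])
  then show ?thesis by blast
qed

lemma bounded_sendograph:
  assumes "u \<in> fuzzy_numbers" shows "bounded (sendograph u)"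
proof (rule bounded_subset)
  show "bounded (alpha_cut u 0 \<times> {0..1::real})"
    using fuzzy_numbers_alpha_cut(2)[OF assms, of 0] by (simp add: bounded_Times compact_imp_bounded)
  show "sendograph u \<subseteq> alpha_cut u 0 \<times> {0..1}" by (auto simp: sendograph_def)
qed

definition level_comb :: "real \<Rightarrow> 'a::real_vector \<times> real \<Rightarrow> 'a \<times> real \<Rightarrow> 'a \<times> real" where
  "level_comb \<alpha> p q = (\<alpha> *\<^sub>R fst p + (1 - \<alpha>) *\<^sub>R fst q, min (snd p) (snd q))"

lemma dist_level_comb_le:
  fixes p q p' q' :: "'a::real_normed_vector \<times> real"
  assumes "0 \<le> \<alpha>" "\<alpha> \<le> 1"
  shows "dist (level_comb \<alpha> p q) (level_comb \<alpha> p' q') \<le> sqrt 2 * max (dist p p') (dist q q')"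
proof -
  define M where "M = max (dist p p') (dist q q')"
  have "dist (\<alpha> *\<^sub>R fst p + (1 - \<alpha>) *\<^sub>R fst q) (\<alpha> *\<^sub>R fst p' + (1 - \<alpha>) *\<^sub>R fst q')
      = norm (\<alpha> *\<^sub>R (fst p - fst p') + (1 - \<alpha>) *\<^sub>R (fst q - fst q'))"
    by (simp add: dist_norm algebra_simps)
  also have "\<dots> \<le> \<alpha> * dist (fst p) (fst p') + (1 - \<alpha>) * dist (fst q) (fst q')"
    using assms norm_triangle_ineq[of "\<alpha> *\<^sub>R (fst p - fst p')" "(1 - \<alpha>) *\<^sub>R (fst q - fst q')"]
    by (simp add: dist_norm)
  also have "\<dots> \<le> \<alpha> * M + (1 - \<alpha>) * M"
    using assms dist_fst_le[of p p'] dist_fst_le[of q q']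
    by (intro add_mono mult_left_mono) (auto simp: M_def)
  finally have space: "dist (\<alpha> *\<^sub>R fst p + (1 - \<alpha>) *\<^sub>R fst q) (\<alpha> *\<^sub>R fst p' + (1 - \<alpha>) *\<^sub>R fst q') \<le> M"
    by (simp add: algebra_simps)
  have level: "dist (min (snd p) (snd q)) (min (snd p') (snd q')) \<le> M"
    using dist_snd_le[of p p'] dist_snd_le[of q q'] by (auto simp: M_def dist_real_def)
  have "dist (level_comb \<alpha> p q) (level_comb \<alpha> p' q') \<le> sqrt (M\<^sup>2 + M\<^sup>2)"
    unfolding level_comb_def dist_Pair_Pair
    using space level by (intro real_sqrt_le_mono add_mono power_mono) auto
  also have "\<dots> = sqrt 2 * M" by (simp add: M_def real_sqrt_mult max_def)
  finally show ?thesis by (simp add: M_def)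
qed

lemma sendograph_fuzzy_add_scale:
  assumes u: "u \<in> fuzzy_numbers" and v: "v \<in> fuzzy_numbers"
  shows "sendograph (fuzzy_add (fuzzy_scale \<alpha> u) (fuzzy_scale (1 - \<alpha>) v))
    = case_prod (level_comb \<alpha>) ` (sendograph u \<times> sendograph v)"
proof -
  have m: "fuzzy_add (fuzzy_scale \<alpha> u) (fuzzy_scale (1 - \<alpha>) v) \<in> fuzzy_numbers"
    using u v by (simp add: fuzzy_add_in_fuzzy_numbers fuzzy_scale_in_fuzzy_numbers)
  have cut: "(z, \<beta>) \<in> sendograph (fuzzy_add (fuzzy_scale \<alpha> u) (fuzzy_scale (1 - \<alpha>) v)) \<longleftrightarrow>
      \<beta> \<in> {0..1} \<and> (\<exists>x\<in>alpha_cut u \<beta>. \<exists>y\<in>alpha_cut v \<beta>. z = \<alpha> *\<^sub>R x + (1 - \<alpha>) *\<^sub>R y)" for z \<beta>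
  proof (cases "\<beta> \<in> {0..1}")
    case True
    then show ?thesis
      using u v by (simp add: mem_sendograph[OF m] alpha_cut_fuzzy_add alpha_cut_fuzzy_scale
          fuzzy_scale_in_fuzzy_numbers) blast
  qed (auto simp: mem_sendograph[OF m])
  show ?thesis
  proof (intro equalityI subrelI subsetI)
    fix z \<beta> assume "(z, \<beta>) \<in> sendograph (fuzzy_add (fuzzy_scale \<alpha> u) (fuzzy_scale (1 - \<alpha>) v))"
    then obtain x y where "\<beta> \<in> {0..1}" "x \<in> alpha_cut u \<beta>" "y \<in> alpha_cut v \<beta>"
      and "(z, \<beta>) = level_comb \<alpha> (x, \<beta>) (y, \<beta>)"
      using cut by (auto simp: level_comb_def)
    then show "(z, \<beta>) \<in> case_prod (level_comb \<alpha>) ` (sendograph u \<times> sendograph v)"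
      using u v by (force simp: mem_sendograph)
  next
    fix p assume "p \<in> case_prod (level_comb \<alpha>) ` (sendograph u \<times> sendograph v)"
    then obtain x \<beta> y \<gamma> where x: "(x, \<beta>) \<in> sendograph u" and y: "(y, \<gamma>) \<in> sendograph v"
      and p: "p = level_comb \<alpha> (x, \<beta>) (y, \<gamma>)" by auto
    have "x \<in> alpha_cut u (min \<beta> \<gamma>)" "y \<in> alpha_cut v (min \<beta> \<gamma>)"
      using x y alpha_cut_antimono[of "min \<beta> \<gamma>" \<beta> u] alpha_cut_antimono[of "min \<beta> \<gamma>" \<gamma> v]
      by (auto simp: mem_sendograph u v)
    with x y show "p \<in> sendograph (fuzzy_add (fuzzy_scale \<alpha> u) (fuzzy_scale (1 - \<alpha>) v))"
      unfolding p level_comb_def using cut by (auto simp: mem_sendograph u v)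
  qed
qed

lemma sendograph_level_comb_self:
  assumes w: "w \<in> fuzzy_numbers" and "0 \<le> \<alpha>" "\<alpha> \<le> 1"
  shows "case_prod (level_comb \<alpha>) ` (sendograph w \<times> sendograph w) = sendograph w"
proof (intro equalityI subsetI)
  fix p assume "p \<in> case_prod (level_comb \<alpha>) ` (sendograph w \<times> sendograph w)"
  then obtain x \<beta> y \<gamma> where x: "(x, \<beta>) \<in> sendograph w" and y: "(y, \<gamma>) \<in> sendograph w"
    and p: "p = level_comb \<alpha> (x, \<beta>) (y, \<gamma>)" by auto
  have "x \<in> alpha_cut w (min \<beta> \<gamma>)" "y \<in> alpha_cut w (min \<beta> \<gamma>)" "min \<beta> \<gamma> \<in> {0..1}"
    using x y alpha_cut_antimono[of "min \<beta> \<gamma>" \<beta> w] alpha_cut_antimono[of "min \<beta> \<gamma>" \<gamma> w]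
    by (auto simp: mem_sendograph w)
  then have "\<alpha> *\<^sub>R x + (1 - \<alpha>) *\<^sub>R y \<in> alpha_cut w (min \<beta> \<gamma>)"
    using fuzzy_numbers_alpha_cut(3)[OF w] assms(2,3) by (simp add: convex_def)
  then show "p \<in> sendograph w"
    using \<open>min \<beta> \<gamma> \<in> {0..1}\<close> by (simp add: p level_comb_def mem_sendograph w)
next
  fix p assume "p \<in> sendograph w"
  moreover have "p = level_comb \<alpha> p p" by (simp add: level_comb_def algebra_simps)
  ultimately show "p \<in> case_prod (level_comb \<alpha>) ` (sendograph w \<times> sendograph w)" by force
qed

theorem corollary2p1:
  fixes u v w :: "'a::euclidean_space \<Rightarrow> real" and \<alpha> :: real
  assumes "u \<in> fuzzy_numbers" and "v \<in> fuzzy_numbers" and "w \<in> fuzzy_numbers"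
    and "0 \<le> \<alpha>" and "\<alpha> \<le> 1"
  shows "send_metric (fuzzy_add (fuzzy_scale \<alpha> u) (fuzzy_scale (1 - \<alpha>) v)) w
           \<le> sqrt 2 * max (send_metric u w) (send_metric v w)"
proof -
  have "send_metric (fuzzy_add (fuzzy_scale \<alpha> u) (fuzzy_scale (1 - \<alpha>) v)) w
      = hausdorff_metric (case_prod (level_comb \<alpha>) ` (sendograph u \<times> sendograph v))
          (case_prod (level_comb \<alpha>) ` (sendograph w \<times> sendograph w))"
    using assms by (simp add: send_metric_def sendograph_fuzzy_add_scale sendograph_level_comb_self)
  also have "\<dots> \<le> sqrt 2 * max (send_metric u w) (send_metric v w)"
    unfolding send_metric_def using assms
    by (intro hausdorff_metric_image_pairs_le dist_level_comb_le sendograph_nonempty bounded_sendograph)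
      auto
  finally show ?thesis .
qed

end
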